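(* Let $H$ be a graph with $1\le\delta(H)\le|V(H)|-2$ and let $\{\mathcal H_i\}_{i=1}^s$ be a $d$-sequence of $H$ such that $Z=\min\{z_i(H): 2\le i\le s\}\le 0$. Let $T$ be a graph with $1\le\delta(T)\le|V(T)|-2$ having a $d$-sequence $\{\mathcal T_i\}_{i=1}^t$ with $z_i(T)\ge0$ for all $2\le i\le t$. Let $G=H+T$. If $z_t(T)\ge d_H-Z$, then $|V(G)|+\delta(G)\le str(G)\le |V(G)|+d_T$.
   Context: For a graph $G$ of order $p$, a numbering of $G$ is a bijection $f:V(G)\to[1,p]$. The strength of a numbering $f$ is $str_f(G)=\max\{f(u)+f(v): uv\in E(G)\}$, and $str(G)=\min\{str_f(G): f \text{ a numbering of } G\}$. $\delta(G)$ is the minimum degree; $G+H$ denotes disjoint union; $mK_1$ is the edgeless graph on $m$ vertices; $K_r$ the complete graph. $d$-sequence: Let $G$ have order $p$ with $1\le\delta(G)\le p-2$. Set $\mathcal G_1=G_1=G$, $m_1=0$. For each $i$, write $\mathcal G_i=m_iK_1+G_i$, where $m_i\ge0$ is the number of isolated vertices of $\mathcal G_i$ and $G_i$ has no isolated vertices. If $\mathcal G_i$ is neither of the form $mK_1$ ($m\ge1$) nor $mK_1+K_r$ ($m\ge0$, $r\ge2$), choose any vertex $u_i$ of $G_i$, put $d_i=\deg_{G_i}(u_i)$, and let $\mathcal G_{i+1}$ be obtained from $G_i$ by deleting $u_i$ together with all its neighbours in $G_i$. Stop at the first index $s$ ($s\ge 2$) for which $\mathcal G_s$ is $m_sK_1$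 with $m_s\ge1$ (then set $d_s=0$) or $m_sK_1+K_r$ with $m_s\ge0$, $r\ge2$ (then $d_s=r-1$). The sequence $\{\mathcal G_i\}_{i=1}^s$ is a $d$-sequence of $G$. Write $d_G=d_1$, $y_j(G)=m_j+1-d_j$ and $z_i(G)=\sum_{j=2}^i y_j(G)$ for $2\le i\le s$. *)

theory Defs
  imports Main
begin

definition graph :: "'a set \<Rightarrow> ('a \<Rightarrow> 'a \<Rightarrow> bool) \<Rightarrow> bool" where
  "graph V E \<longleftrightarrow> finite V \<and> (\<forall>x y. E x y \<longrightarrow> E y x) \<and> (\<forall>x. \<not> E x x)
     \<and> (\<forall>x y. E x y \<longrightarrow> x \<in> V \<and> y \<in> V)"

definition degree :: "'a set \<Rightarrow> ('a \<Rightarrow> 'a \<Rightarrow> bool) \<Rightarrow> 'a \<Rightarrow> nat" where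
  "degree V E v = card {w \<in> V. E v w}"

definition mindeg :: "'a set \<Rightarrow> ('a \<Rightarrow> 'a \<Rightarrow> bool) \<Rightarrow> nat" where
  "mindeg V E = Min (degree V E ` V)"

definition strength_of :: "'a set \<Rightarrow> ('a \<Rightarrow> 'a \<Rightarrow> bool) \<Rightarrow> ('a \<Rightarrow> nat) \<Rightarrow> nat" where
  "strength_of V E f = Max {f u + f v | u v. E u v}"

definition str :: "'a set \<Rightarrow> ('a \<Rightarrow> 'a \<Rightarrow> bool) \<Rightarrow> nat" where
  "str V E = Min {strength_of V E f | f. bij_betw f V {1..card V}}"

text \<open>Disjoint union H + T on the sum type.\<close>

fun sum_edges :: "('a \<Rightarrow> 'a \<Rightarrow> bool) \<Rightarrow> ('b \<Rightarrow> 'b \<Rightarrow> bool) \<Rightarrow> 'a + 'b \<Rightarrow> 'a + 'b \<Rightarrow> bool" where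
  "sum_edges EH ET (Inl x) (Inl y) = EH x y"
| "sum_edges EH ET (Inr x) (Inr y) = ET x y"
| "sum_edges EH ET _ _ = False"

definition sum_verts :: "'a set \<Rightarrow> 'b set \<Rightarrow> ('a + 'b) set" where
  "sum_verts VH VT = Inl ` VH \<union> Inr ` VT"

text \<open>d-sequences. Each graph \<G>_i is the subgraph of G induced by a vertex set W_i.
iso E W: isolated vertices of the induced graph on W; core E W: vertex set of G_i.\<close>

definition iso :: "('a \<Rightarrow> 'a \<Rightarrow> bool) \<Rightarrow> 'a set \<Rightarrow> 'a set" where
  "iso E W = {v \<in> W. \<forall>w \<in> W. \<not> E v w}"

definition core :: "('a \<Rightarrow> 'a \<Rightarrow> bool) \<Rightarrow> 'a set \<Rightarrow> 'a set" where
  "core E W = W - iso E W"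

definition next_set :: "('a \<Rightarrow> 'a \<Rightarrow> bool) \<Rightarrow> 'a set \<Rightarrow> 'a \<Rightarrow> 'a set" where
  "next_set E W u = core E W - ({u} \<union> {w \<in> core E W. E u w})"

text \<open>dW V E u k is the vertex set of \<G>_{k+1} (u i is the chosen vertex u_i).\<close>
primrec dW :: "'a set \<Rightarrow> ('a \<Rightarrow> 'a \<Rightarrow> bool) \<Rightarrow> (nat \<Rightarrow> 'a) \<Rightarrow> nat \<Rightarrow> 'a set" where
  "dW V E u 0 = V"
| "dW V E u (Suc k) = next_set E (dW V E u k) (u (Suc k))"

definition calG :: "'a set \<Rightarrow> ('a \<Rightarrow> 'a \<Rightarrow> bool) \<Rightarrow> (nat \<Rightarrow> 'a) \<Rightarrow> nat \<Rightarrow> 'a set" where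
  "calG V E u i = dW V E u (i - 1)"

text \<open>Terminal forms: mK_1 with m \<ge> 1, or mK_1 + K_r with r \<ge> 2.\<close>
definition is_empty_form :: "('a \<Rightarrow> 'a \<Rightarrow> bool) \<Rightarrow> 'a set \<Rightarrow> bool" where
  "is_empty_form E W \<longleftrightarrow> W \<noteq> {} \<and> core E W = {}"

definition is_clique_form :: "('a \<Rightarrow> 'a \<Rightarrow> bool) \<Rightarrow> 'a set \<Rightarrow> bool" where
  "is_clique_form E W \<longleftrightarrow> card (core E W) \<ge> 2 \<and>
     (\<forall>x \<in> core E W. \<forall>y \<in> core E W. x \<noteq> y \<longrightarrow> E x y)"

definition terminal :: "('a \<Rightarrow> 'a \<Rightarrow> bool) \<Rightarrow> 'a set \<Rightarrow> bool" where
  "terminal E W \<longleftrightarrow> is_empty_form E W \<or> is_clique_form E W"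

definition is_dseq :: "'a set \<Rightarrow> ('a \<Rightarrow> 'a \<Rightarrow> bool) \<Rightarrow> (nat \<Rightarrow> 'a) \<Rightarrow> nat \<Rightarrow> bool" where
  "is_dseq V E u s \<longleftrightarrow> s \<ge> 2 \<and>
     (\<forall>i. 1 \<le> i \<and> i < s \<longrightarrow> \<not> terminal E (calG V E u i) \<and> u i \<in> core E (calG V E u i)) \<and>
     terminal E (calG V E u s)"

definition dseq_m :: "'a set \<Rightarrow> ('a \<Rightarrow> 'a \<Rightarrow> bool) \<Rightarrow> (nat \<Rightarrow> 'a) \<Rightarrow> nat \<Rightarrow> nat" where
  "dseq_m V E u i = card (iso E (calG V E u i))"

definition dseq_d :: "'a set \<Rightarrow> ('a \<Rightarrow> 'a \<Rightarrow> bool) \<Rightarrow> (nat \<Rightarrow> 'a) \<Rightarrow> nat \<Rightarrow> nat \<Rightarrow> nat" where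
  "dseq_d V E u s i =
     (if i < s then card {w \<in> core E (calG V E u i). E (u i) w}
      else if is_empty_form E (calG V E u i) then 0
      else card (core E (calG V E u i)) - 1)"

definition dseq_y :: "'a set \<Rightarrow> ('a \<Rightarrow> 'a \<Rightarrow> bool) \<Rightarrow> (nat \<Rightarrow> 'a) \<Rightarrow> nat \<Rightarrow> nat \<Rightarrow> int" where
  "dseq_y V E u s j = int (dseq_m V E u j) + 1 - int (dseq_d V E u s j)"

definition dseq_z :: "'a set \<Rightarrow> ('a \<Rightarrow> 'a \<Rightarrow> bool) \<Rightarrow> (nat \<Rightarrow> 'a) \<Rightarrow> nat \<Rightarrow> nat \<Rightarrow> int" where
  "dseq_z V E u s i = (\<Sum>j = 2..i. dseq_y V E u s j)"

end

theory Submission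
  imports Defs
begin

text \<open>The lower bound holds for every graph without isolated vertices: the vertex numbered
  card V has at least mindeg neighbours, so one of them is numbered at least mindeg.

  For the upper bound, a numbering is described by a list of vertices, each tagged small or
  big: the small ones get 1, 2, ... and the big ones card V, card V - 1, ... in list order.
  If every big vertex comes after all its neighbours, which are small, at a moment when the
  number of small minus the number of big vertices placed is at most D, and this difference
  is at most D + 1 at the end, then the numbering has strength at most card V + D.
  A d-sequence yields such a list stage by stage: the isolated vertices of \<G>_i are big,
  the neighbours of u_i small and u_i big, and after stage i the running difference is
  d_1 - m_1 - 1 - z_i.
  For G = H + T the list of T (with D = d_T) comes first; it ends with difference at most
  d_T - z_t(T), which leaves enough room to append the list of H, admissible for
  D = d_H - Z.\<close>

section \<open>Graphs and strength\<close>

lemma graph_finite: "graph V E \<Longrightarrow> finite V"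
  unfolding graph_def by blast

lemma graph_edge_in: "graph V E \<Longrightarrow> E u v \<Longrightarrow> u \<in> V \<and> v \<in> V"
  unfolding graph_def by blast

lemma graph_sym: "graph V E \<Longrightarrow> E u v \<Longrightarrow> E v u"
  unfolding graph_def by blast

lemma graph_irrefl: "graph V E \<Longrightarrow> \<not> E v v"
  unfolding graph_def by blast

lemma mindeg_le_degree: "finite V \<Longrightarrow> v \<in> V \<Longrightarrow> mindeg V E \<le> degree V E v"
  unfolding mindeg_def by simp

lemma ex_edge_of_mindeg:
  assumes "finite V" "v \<in> V" "1 \<le> mindeg V E"
  obtains w where "E v w"
proof -
  have "card {w \<in> V. E v w} \<noteq> 0"
    using mindeg_le_degree[OF assms(1,2), of E] assms(3) unfolding degree_def by linarith
  then have "{w \<in> V. E v w} \<noteq> {}"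
    by force
  then show thesis
    using that by blast
qed

lemma finite_edge_sums:
  assumes "graph V E"
  shows "finite {f u + f v | u v. E u v}"
proof -
  have "{(u, v). E u v} \<subseteq> V \<times> V"
    using graph_edge_in[OF assms] by auto
  then have "finite {(u, v). E u v}"
    using finite_subset graph_finite[OF assms] by blast
  moreover have "{f u + f v | u v. E u v} = (\<lambda>(u, v). f u + f v) ` {(u, v). E u v}"
    by auto
  ultimately show ?thesis
    by simp
qed

lemma edge_sum_le_strength_of: "graph V E \<Longrightarrow> E u v \<Longrightarrow> f u + f v \<le> strength_of V E f"
  unfolding strength_of_def using finite_edge_sums by (intro Max_ge) blast+

lemma strength_of_le:
  assumes "graph V E" "E a b" "\<And>u v. E u v \<Longrightarrow> f u + f v \<le> N"
  shows "strength_of V E f \<le> N"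
  unfolding strength_of_def using assms finite_edge_sums by (intro Max.boundedI) blast+

lemma finite_strengths:
  assumes "graph V E" "E a b"
  shows "finite {strength_of V E f | f. bij_betw f V {1..card V}}"
proof -
  have "strength_of V E f \<le> 2 * card V" if f: "bij_betw f V {1..card V}" for f
  proof (rule strength_of_le[OF assms])
    fix u v assume "E u v"
    then have "u \<in> V" "v \<in> V"
      using graph_edge_in[OF assms(1)] by blast+
    then have "f u \<in> {1..card V}" "f v \<in> {1..card V}"
      using bij_betwE[OF f] by blast+
    then show "f u + f v \<le> 2 * card V"
      by simp
  qed
  then have "{strength_of V E f | f. bij_betw f V {1..card V}} \<subseteq> {..2 * card V}"
    by blast
  then show ?thesis
    by (rule finite_subset) simp
qed

lemma str_le_strength_of:
  assumes "graph V E" "E a b" "bij_betw f V {1..card V}"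
  shows "str V E \<le> strength_of V E f"
  unfolding str_def using assms(3) by (intro Min_le[OF finite_strengths[OF assms(1,2)]]) blast

lemma str_attained:
  assumes "graph V E" "E a b"
  obtains f where "bij_betw f V {1..card V}" "str V E = strength_of V E f"
proof -
  obtain h where "bij_betw h V {0..<card V}"
    using ex_bij_betw_finite_nat graph_finite[OF assms(1)] by blast
  then have "bij_betw (Suc \<circ> h) V {1..card V}"
    by (rule bij_betw_trans)
      (simp add: bij_betw_def image_Suc_atLeastLessThan atLeastLessThanSuc_atLeastAtMost)
  then have "{strength_of V E f | f. bij_betw f V {1..card V}} \<noteq> {}"
    by blast
  then have "str V E \<in> {strength_of V E f | f. bij_betw f V {1..card V}}"
    unfolding str_def by (rule Min_in[OF finite_strengths[OF assms]])
  then show thesis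
    using that by blast
qed

lemma card_le_Max: "finite A \<Longrightarrow> 0 \<notin> A \<Longrightarrow> card (A :: nat set) \<le> Max A"
proof -
  assume A: "finite A" "0 \<notin> A"
  then have "A \<subseteq> {1..Max A}"
    by (auto simp: Suc_le_eq intro: gr0I)
  then show "card A \<le> Max A"
    using card_mono[of "{1..Max A}" A] by simp
qed

theorem str_lower_bound:
  assumes G: "graph V E" and "V \<noteq> {}" "1 \<le> mindeg V E"
  shows "card V + mindeg V E \<le> str V E"
proof -
  have fin: "finite V"
    using graph_finite[OF G] .
  obtain v0 w0 where "v0 \<in> V" "E v0 w0"
    using assms(2) ex_edge_of_mindeg[OF fin _ assms(3)] by blast
  then obtain f where f: "bij_betw f V {1..card V}" and str: "str V E = strength_of V E f"
    using str_attained[OF G] by blast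
  have img: "f ` V = {1..card V}"
    using f by (simp add: bij_betw_def)
  have "card V \<in> f ` V"
    using img fin assms(2) by (simp add: Suc_le_eq card_gt_0_iff)
  then obtain v where v: "v \<in> V" "f v = card V"
    by (metis imageE)
  define N where "N = {w \<in> V. E v w}"
  have fin_N: "finite N" and N_sub: "N \<subseteq> V"
    using fin by (auto simp: N_def)
  obtain w1 where "E v w1"
    using ex_edge_of_mindeg[OF fin v(1) assms(3)] .
  then have "w1 \<in> N"
    using graph_edge_in[OF G] by (simp add: N_def)
  then have "Max (f ` N) \<in> f ` N"
    using fin_N by (intro Max_in) auto
  then obtain w where w: "w \<in> N" "f w = Max (f ` N)"
    by (metis imageE)
  have "degree V E v = card (f ` N)"
    using card_image[OF inj_on_subset[OF bij_betw_imp_inj_on[OF f] N_sub]]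
    by (simp add: N_def degree_def)
  also have "\<dots> \<le> f w"
    using card_le_Max[of "f ` N"] img N_sub fin_N w(2) by force
  finally have "mindeg V E \<le> f w"
    using mindeg_le_degree[OF fin v(1), of E] by linarith
  moreover have "f v + f w \<le> strength_of V E f"
    using w(1) edge_sum_le_strength_of[OF G] by (simp add: N_def)
  ultimately show ?thesis
    using str v(2) by simp
qed

section \<open>Numberings encoded by tagged vertex lists\<close>

definition n_small :: "('v \<times> bool) list \<Rightarrow> nat" where
  "n_small xs = length (filter (\<lambda>q. \<not> snd q) xs)"

definition n_big :: "('v \<times> bool) list \<Rightarrow> nat" where
  "n_big xs = length (filter snd xs)"

definition excess :: "('v \<times> bool) list \<Rightarrow> int" where
  "excess xs = int (n_small xs) - int (n_big xs)"

definition smalls :: "('v \<times> bool) list \<Rightarrow> 'v set" where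
  "smalls xs = {x. (x, False) \<in> set xs}"

lemma n_small_simps [simp]:
  "n_small [] = 0" "n_small ((x, big) # xs) = (if big then n_small xs else Suc (n_small xs))"
  "n_small (xs @ ys) = n_small xs + n_small ys"
  by (simp_all add: n_small_def)

lemma n_big_simps [simp]:
  "n_big [] = 0" "n_big ((x, big) # xs) = (if big then Suc (n_big xs) else n_big xs)"
  "n_big (xs @ ys) = n_big xs + n_big ys"
  by (simp_all add: n_big_def)

lemma excess_simps [simp]:
  "excess [] = 0" "excess ((x, big) # xs) = (if big then excess xs - 1 else excess xs + 1)"
  "excess (xs @ ys) = excess xs + excess ys"
  by (simp_all add: excess_def)

lemma smalls_simps [simp]:
  "smalls [] = {}" "smalls ((x, big) # xs) = (if big then smalls xs else insert x (smalls xs))"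
  "smalls (xs @ ys) = smalls xs \<union> smalls ys"
  by (auto simp: smalls_def)

lemma length_eq_n_small_plus_n_big: "length xs = n_small xs + n_big xs"
  by (induction xs) auto

lemma fst_set_cases:
  assumes "y \<in> fst ` set xs"
  obtains "(y, True) \<in> set xs" | "(y, False) \<in> set xs"
proof -
  obtain big where "(y, big) \<in> set xs"
    using assms by force
  then show thesis
    using that by (cases big) auto
qed

lemma small_if_not_big: "y \<in> fst ` set xs \<Longrightarrow> (y, True) \<notin> set xs \<Longrightarrow> (y, False) \<in> set xs"
  by (erule fst_set_cases) auto

text \<open>A pair (x, True) marks x as big, (x, False) as small. In admissible E D p S xs,
  p is the number of small minus the number of big vertices placed before xs, and S is the
  set of the small ones.\<close>
fun admissible :: "('v \<Rightarrow> 'v \<Rightarrow> bool) \<Rightarrow> int \<Rightarrow> int \<Rightarrow> 'v set \<Rightarrow> ('v \<times> bool) list \<Rightarrow> bool" where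
  "admissible E D p S [] = True"
| "admissible E D p S ((x, big) # xs) =
     (if big then p \<le> D \<and> (\<forall>w. E x w \<longrightarrow> w \<in> S) \<and> admissible E D (p - 1) S xs
      else admissible E D (p + 1) (insert x S) xs)"

lemma admissible_append:
  "admissible E D p S (xs @ ys) \<longleftrightarrow>
     admissible E D p S xs \<and> admissible E D (p + excess xs) (S \<union> smalls xs) ys"
  by (induction E D p S xs rule: admissible.induct) (auto simp: algebra_simps)

lemma admissible_big_neighbour:
  "admissible E D p S xs \<Longrightarrow> (x, True) \<in> set xs \<Longrightarrow> E x y \<Longrightarrow> y \<in> S \<union> smalls xs"
  by (induction E D p S xs rule: admissible.induct) (auto split: if_splits)

lemma admissible_smalls: "admissible E D p S (map (\<lambda>x. (x, False)) ys)"
  by (induction ys arbitrary: p S) auto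

lemma admissible_bigs:
  "p \<le> D \<Longrightarrow> \<forall>x\<in>set ys. \<forall>w. E x w \<longrightarrow> w \<in> S \<Longrightarrow> admissible E D p S (map (\<lambda>x. (x, True)) ys)"
  by (induction ys arbitrary: p) auto

lemma admissible_map:
  assumes "\<And>x w. E' (g x) w \<Longrightarrow> \<exists>w0. w = g w0 \<and> E x w0"
  shows "admissible E D p S xs \<Longrightarrow> p' + D \<le> D' + p \<Longrightarrow> g ` S \<subseteq> S' \<Longrightarrow>
    admissible E' D' p' S' (map (apfst g) xs)"
proof (induction xs arbitrary: p p' S S')
  case (Cons q xs)
  obtain x big where q: "q = (x, big)"
    by (cases q)
  show ?case
  proof (cases big)
    case True
    have "\<forall>w. E' (g x) w \<longrightarrow> w \<in> S'"
      using assms Cons.prems True by (fastforce simp: q)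
    then show ?thesis
      using Cons.IH[of "p - 1" S "p' - 1" S'] Cons.prems True by (simp add: q)
  next
    case False
    then show ?thesis
      using Cons.IH[of "p + 1" "insert x S" "p' + 1" "insert (g x) S'"] Cons.prems by (auto simp: q)
  qed
qed simp

lemma excess_map_apfst: "excess (map (apfst g) xs) = excess xs"
  by (induction xs) (auto simp: excess_def n_small_def n_big_def)

definition tag_numbering :: "nat \<Rightarrow> ('v \<times> bool) list \<Rightarrow> ('v \<Rightarrow> nat) \<Rightarrow> bool" where
  "tag_numbering P xs f \<longleftrightarrow> inj_on f (fst ` set xs)
    \<and> (\<forall>x. (x, False) \<in> set xs \<longrightarrow> f x \<in> {1..n_small xs})
    \<and> (\<forall>x. (x, True) \<in> set xs \<longrightarrow> f x \<in> {P + 1 - n_big xs..P})"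

lemma tag_numbering_snoc:
  assumes f: "tag_numbering P xs f" and x: "x \<notin> fst ` set xs" and len: "length xs < P"
  shows "tag_numbering P (xs @ [(x, big)]) (f(x := if big then P - n_big xs else Suc (n_small xs)))"
proof -
  define l where "l = (if big then P - n_big xs else Suc (n_small xs))"
  have f_small: "\<forall>y. (y, False) \<in> set xs \<longrightarrow> f y \<in> {1..n_small xs}"
    and f_big: "\<forall>y. (y, True) \<in> set xs \<longrightarrow> f y \<in> {P + 1 - n_big xs..P}"
    using f unfolding tag_numbering_def by blast+
  have x_notin: "(x, c) \<notin> set xs" for c
    using x by force
  have len': "n_small xs + n_big xs < P"
    using len length_eq_n_small_plus_n_big[of xs] by simp
  have old: "f y \<le> n_small xs \<or> P + 1 - n_big xs \<le> f y" if "y \<in> fst ` set xs" for y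
    using that by (cases rule: fst_set_cases) (use f_small f_big in auto)
  have "n_small xs < l" "l < P + 1 - n_big xs"
    using len' by (auto simp: l_def)
  then have "l \<notin> f ` fst ` set xs"
    using old by fastforce
  then have "inj_on (f(x := l)) (fst ` set (xs @ [(x, big)]))"
    using f x unfolding tag_numbering_def by (auto simp: inj_on_def)
  then show ?thesis
    using f_small f_big x_notin len' unfolding tag_numbering_def l_def by auto
qed

text \<open>The label of a big vertex is P minus the number of earlier big vertices, and its
  neighbours carry labels at most the number of earlier small vertices: the difference is
  the counter of admissibility, which is at most D.\<close>
lemma schedule_numbering:
  assumes "distinct (map fst xs)" "admissible E D 0 {} xs" "length xs \<le> P"
  shows "\<exists>f. tag_numbering P xs f
    \<and> (\<forall>x y. (x, True) \<in> set xs \<longrightarrow> E x y \<longrightarrow> int (f x + f y) \<le> int P + D)"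
  using assms
proof (induction xs rule: rev_induct)
  case Nil
  show ?case
    by (simp add: tag_numbering_def)
next
  case (snoc q xs)
  obtain x big where q: "q = (x, big)"
    by (cases q)
  from snoc.prems have dist: "distinct (map fst xs)" and x_new: "x \<notin> fst ` set xs"
    and adm: "admissible E D 0 {} xs" and adm_x: "admissible E D (excess xs) (smalls xs) [(x, big)]"
    by (auto simp: q admissible_append)
  have len: "length xs < P"
    using snoc.prems(3) by simp
  obtain f where f: "tag_numbering P xs f"
    and f_edge: "\<forall>z y. (z, True) \<in> set xs \<longrightarrow> E z y \<longrightarrow> int (f z + f y) \<le> int P + D"
    using snoc.IH[OF dist adm] len by auto
  define g where "g = f(x := if big then P - n_big xs else Suc (n_small xs))"
  have "tag_numbering P (xs @ [q]) g"
    unfolding g_def q by (rule tag_numbering_snoc[OF f x_new len])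
  moreover have "\<forall>z y. (z, True) \<in> set (xs @ [q]) \<longrightarrow> E z y \<longrightarrow> int (g z + g y) \<le> int P + D"
  proof (intro allI impI)
    fix z y assume z: "(z, True) \<in> set (xs @ [q])" and "E z y"
    have "y \<in> smalls xs"
      using z \<open>E z y\<close> adm_x admissible_big_neighbour[OF adm, of z y] by (auto simp: q split: if_splits)
    then have y: "(y, False) \<in> set xs" "y \<noteq> x" "f y \<le> n_small xs"
      using x_new f by (force simp: smalls_def tag_numbering_def)+
    show "int (g z + g y) \<le> int P + D"
    proof (cases "z = x")
      case True
      then have "big" "excess xs \<le> D"
        using z x_new adm_x by (force simp: q split: if_splits)+
      then show ?thesis
        using y len True length_eq_n_small_plus_n_big[of xs] by (simp add: g_def excess_def)
    next
      case False
      then show ?thesis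
        using z y \<open>E z y\<close> f_edge by (auto simp: g_def q)
    qed
  qed
  ultimately show ?case
    by (intro exI[of _ g] conjI)
qed

definition schedule :: "'v set \<Rightarrow> ('v \<Rightarrow> 'v \<Rightarrow> bool) \<Rightarrow> int \<Rightarrow> ('v \<times> bool) list \<Rightarrow> bool" where
  "schedule V E D xs \<longleftrightarrow> distinct (map fst xs) \<and> fst ` set xs = V \<and> admissible E D 0 {} xs"

lemma bij_betw_atLeastAtMost_card:
  "finite V \<Longrightarrow> inj_on f V \<Longrightarrow> f ` V \<subseteq> {1..card V} \<Longrightarrow> bij_betw f V {1..card V}"
  by (metis bij_betw_imageI card_atLeastAtMost card_image card_subset_eq diff_Suc_1
      finite_atLeastAtMost)

lemma tag_numbering_bij:
  assumes f: "tag_numbering (length xs) xs f" and dist: "distinct (map fst xs)"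
  shows "bij_betw f (fst ` set xs) {1..length xs}"
proof -
  have card: "card (fst ` set xs) = length xs"
    using distinct_card[OF dist] by simp
  have "f y \<in> {1..length xs}" if "y \<in> fst ` set xs" for y
    using that by (cases rule: fst_set_cases)
      (use f length_eq_n_small_plus_n_big[of xs] in \<open>auto simp: tag_numbering_def\<close>)
  then have "f ` fst ` set xs \<subseteq> {1..card (fst ` set xs)}"
    unfolding card by blast
  then show ?thesis
    using bij_betw_atLeastAtMost_card[of "fst ` set xs" f] f card by (simp add: tag_numbering_def)
qed

theorem str_le_of_schedule:
  assumes G: "graph V E" "E a b" and xs: "schedule V E (int D) xs" "excess xs \<le> int D + 1"
  shows "str V E \<le> card V + D"
proof -
  have dist: "distinct (map fst xs)" and V: "fst ` set xs = V" and adm: "admissible E (int D) 0 {} xs"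
    using xs(1) unfolding schedule_def by blast+
  have card: "card V = length xs"
    using distinct_card[OF dist] V by simp
  obtain f where f: "tag_numbering (card V) xs f"
    and big_edge: "\<forall>x y. (x, True) \<in> set xs \<longrightarrow> E x y \<longrightarrow> int (f x + f y) \<le> int (card V) + int D"
    using schedule_numbering[OF dist adm, of "card V"] card by auto
  have bij: "bij_betw f V {1..card V}"
    using tag_numbering_bij[OF _ dist, of f] f V card by simp
  have inj: "inj_on f V" and small: "\<forall>x. (x, False) \<in> set xs \<longrightarrow> f x \<in> {1..n_small xs}"
    using f bij unfolding tag_numbering_def bij_betw_def by blast+
  have "f u + f v \<le> card V + D" if "E u v" for u v
  proof (cases "(u, True) \<in> set xs \<or> (v, True) \<in> set xs")
    case True
    then show ?thesis
      using big_edge that graph_sym[OF G(1) that] by (smt (verit) add.commute of_nat_add of_nat_le_iff)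
  next
    case False
    have uv: "u \<in> V" "v \<in> V"
      using graph_edge_in[OF G(1) that] by blast+
    then have "(u, False) \<in> set xs" "(v, False) \<in> set xs"
      using False V by (auto intro: small_if_not_big)
    then have "f u \<le> n_small xs" "f v \<le> n_small xs"
      using small by auto
    moreover have "f u \<noteq> f v"
      using inj_on_contraD[OF inj _ uv] graph_irrefl[OF G(1)] that by blast
    ultimately show ?thesis
      using xs(2) card length_eq_n_small_plus_n_big[of xs] unfolding excess_def by linarith
  qed
  then have "strength_of V E f \<le> card V + D"
    by (rule strength_of_le[OF G])
  then show ?thesis
    using str_le_strength_of[OF G bij] by linarith
qed

section \<open>Schedules from d-sequences\<close>

definition listing :: "'v set \<Rightarrow> 'v list" where
  "listing A = (SOME xs. set xs = A \<and> distinct xs)"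

lemma listing: "finite A \<Longrightarrow> set (listing A) = A \<and> distinct (listing A)"
  unfolding listing_def by (rule someI_ex) (rule finite_distinct_list)

definition tagged :: "'v set \<Rightarrow> bool \<Rightarrow> ('v \<times> bool) list" where
  "tagged A big = map (\<lambda>x. (x, big)) (listing A)"

lemma distinct_tagged: "finite A \<Longrightarrow> distinct (map fst (tagged A big))"
  by (drule listing) (simp add: tagged_def comp_def)

lemma fst_set_tagged: "finite A \<Longrightarrow> fst ` set (tagged A big) = A"
  by (drule listing) (simp add: tagged_def image_image)

lemma excess_tagged:
  assumes "finite A"
  shows "excess (tagged A big) = (if big then - int (card A) else int (card A))"
proof -
  have "excess (map (\<lambda>x. (x, big)) ys) = (if big then - int (length ys) else int (length ys))" for ys
    by (induction ys) auto
  then show ?thesis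
    using listing[OF assms] distinct_card by (metis tagged_def)
qed

lemma smalls_tagged: "finite A \<Longrightarrow> smalls (tagged A big) = (if big then {} else A)"
  using listing by (auto simp: smalls_def tagged_def)

lemma admissible_tagged_small: "admissible E D p S (tagged A False)"
  unfolding tagged_def by (rule admissible_smalls)

definition core_nbrs :: "('v \<Rightarrow> 'v \<Rightarrow> bool) \<Rightarrow> 'v set \<Rightarrow> 'v \<Rightarrow> 'v set" where
  "core_nbrs E W c = {w \<in> core E W. E c w}"

lemma next_set_eq: "next_set E W c = core E W - insert c (core_nbrs E W c)"
  by (auto simp: next_set_def core_nbrs_def)

definition stage_block :: "('v \<Rightarrow> 'v \<Rightarrow> bool) \<Rightarrow> 'v set \<Rightarrow> 'v \<Rightarrow> ('v \<times> bool) list" where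
  "stage_block E W c = tagged (iso E W) True @ tagged (core_nbrs E W c) False @ [(c, True)]"

lemma excess_stage_block:
  "finite W \<Longrightarrow> excess (stage_block E W c) = int (card (core_nbrs E W c)) - int (card (iso E W)) - 1"
  by (simp add: stage_block_def excess_tagged core_nbrs_def core_def iso_def)

definition partial_schedule ::
  "'v set \<Rightarrow> ('v \<Rightarrow> 'v \<Rightarrow> bool) \<Rightarrow> int \<Rightarrow> ('v \<times> bool) list \<Rightarrow> 'v set \<Rightarrow> bool" where
  "partial_schedule V E D L W \<longleftrightarrow>
     schedule (V - W) E D L \<and> (\<forall>x\<in>W. \<forall>w. E x w \<longrightarrow> w \<in> W \<or> w \<in> smalls L)"

lemma partial_schedule_Nil: "graph V E \<Longrightarrow> partial_schedule V E D [] V"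
  by (auto simp: partial_schedule_def schedule_def dest: graph_edge_in)

lemma schedule_of_partial_schedule_empty: "partial_schedule V E D L {} \<Longrightarrow> schedule V E D L"
  by (simp add: partial_schedule_def)

lemma admissible_isolated:
  assumes "finite W" "\<forall>x\<in>W. \<forall>w. E x w \<longrightarrow> w \<in> W \<or> w \<in> S" "p \<le> D"
  shows "admissible E D p S (tagged (iso E W) True)"
  unfolding tagged_def
proof (rule admissible_bigs[OF assms(3)])
  have "finite (iso E W)"
    using assms(1) by (simp add: iso_def)
  then have "set (listing (iso E W)) = iso E W"
    using listing by blast
  then show "\<forall>x\<in>set (listing (iso E W)). \<forall>w. E x w \<longrightarrow> w \<in> S"
    using assms(2) unfolding iso_def by blast
qed

lemma admissible_stage_block:
  assumes G: "graph V E" and W: "finite W" "\<forall>x\<in>W. \<forall>w. E x w \<longrightarrow> w \<in> W \<or> w \<in> S"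
    and c: "c \<in> core E W"
    and D: "p \<le> D" "p - int (card (iso E W)) + int (card (core_nbrs E W c)) \<le> D"
  shows "admissible E D p S (stage_block E W c)"
proof -
  have fin: "finite (iso E W)" "finite (core_nbrs E W c)"
    using W(1) by (simp_all add: iso_def core_nbrs_def core_def)
  have "w \<in> S \<union> core_nbrs E W c" if "E c w" for w
  proof (cases "w \<in> W")
    case True
    have "E w c"
      using graph_sym[OF G that] .
    then have "w \<in> core E W"
      using True c by (auto simp: core_def iso_def)
    then show ?thesis
      using that by (simp add: core_nbrs_def)
  next
    case False
    then show ?thesis
      using W(2) c that by (auto simp: core_def)
  qed
  then show ?thesis
    using admissible_isolated[OF W D(1)] D(2) fin
    unfolding stage_block_def admissible_append
    by (simp add: excess_tagged smalls_tagged admissible_tagged_small)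
qed

lemma next_set_closed:
  assumes G: "graph V E" and closed: "\<forall>x\<in>W. \<forall>w. E x w \<longrightarrow> w \<in> W \<or> w \<in> S"
  shows "\<forall>x\<in>next_set E W c. \<forall>w. E x w \<longrightarrow> w \<in> next_set E W c \<or> w \<in> S \<union> core_nbrs E W c"
proof (intro ballI allI impI)
  fix x w assume x: "x \<in> next_set E W c" and e: "E x w"
  show "w \<in> next_set E W c \<or> w \<in> S \<union> core_nbrs E W c"
  proof (cases "w \<in> W")
    case True
    have "x \<in> W" "\<not> E c x"
      using x by (auto simp: next_set_eq core_def core_nbrs_def)
    then have "w \<in> core E W" "w \<noteq> c"
      using True e graph_sym[OF G e] by (auto simp: core_def iso_def)
    then show ?thesis
      by (auto simp: next_set_eq core_nbrs_def)
  next
    case False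
    then show ?thesis
      using closed x e by (auto simp: next_set_eq core_def)
  qed
qed

lemma partial_schedule_stage:
  assumes G: "graph V E" and L: "partial_schedule V E D L W" and W: "W \<subseteq> V"
    and c: "c \<in> core E W"
    and D: "excess L \<le> D" "excess L - int (card (iso E W)) + int (card (core_nbrs E W c)) \<le> D"
  shows "partial_schedule V E D (L @ stage_block E W c) (next_set E W c)"
proof -
  have fin_W: "finite W"
    using finite_subset[OF W graph_finite[OF G]] .
  then have fin: "finite (iso E W)" "finite (core_nbrs E W c)"
    by (simp_all add: iso_def core_nbrs_def core_def)
  have dist: "distinct (map fst L)" and set_L: "fst ` set L = V - W"
    and adm: "admissible E D 0 {} L" and closed: "\<forall>x\<in>W. \<forall>w. E x w \<longrightarrow> w \<in> W \<or> w \<in> smalls L"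
    using L unfolding partial_schedule_def schedule_def by blast+
  have parts: "iso E W \<subseteq> W" "core_nbrs E W c \<subseteq> W" "c \<in> W" "iso E W \<inter> core_nbrs E W c = {}"
    "c \<notin> iso E W" "c \<notin> core_nbrs E W c"
    using c graph_irrefl[OF G] by (auto simp: iso_def core_nbrs_def core_def)
  have set_block: "fst ` set (stage_block E W c) = iso E W \<union> core_nbrs E W c \<union> {c}"
    using fin by (simp add: stage_block_def fst_set_tagged image_Un)
  have "fst ` set (L @ stage_block E W c) = (V - W) \<union> (iso E W \<union> core_nbrs E W c \<union> {c})"
    using set_L set_block by (simp add: image_Un)
  also have "\<dots> = V - next_set E W c"
    using W parts by (auto simp: next_set_eq core_def)
  finally have "fst ` set (L @ stage_block E W c) = V - next_set E W c" .
  moreover have "distinct (map fst (L @ stage_block E W c))"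
    using dist set_L parts fin set_block by (auto simp: stage_block_def distinct_tagged fst_set_tagged)
  moreover have "admissible E D 0 {} (L @ stage_block E W c)"
    using adm admissible_stage_block[OF G fin_W closed c D] by (simp add: admissible_append)
  moreover have "smalls L \<union> core_nbrs E W c \<subseteq> smalls (L @ stage_block E W c)"
    using fin by (simp add: stage_block_def smalls_tagged)
  then have "\<forall>x\<in>next_set E W c. \<forall>w. E x w \<longrightarrow> w \<in> next_set E W c \<or> w \<in> smalls (L @ stage_block E W c)"
    using next_set_closed[OF G closed, of c] by blast
  ultimately show ?thesis
    unfolding partial_schedule_def schedule_def by (intro conjI)
qed

lemma schedule_of_empty_core:
  assumes G: "graph V E" and L: "partial_schedule V E D L W" and W: "W \<subseteq> V"
    and core: "core E W = {}" and D: "excess L \<le> D"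
  shows "schedule V E D (L @ tagged (iso E W) True)"
proof -
  have fin_W: "finite W"
    using finite_subset[OF W graph_finite[OF G]] .
  have iso: "iso E W = W"
    using core by (auto simp: core_def iso_def)
  have dist: "distinct (map fst L)" and set_L: "fst ` set L = V - W"
    and adm: "admissible E D 0 {} L" and closed: "\<forall>x\<in>W. \<forall>w. E x w \<longrightarrow> w \<in> W \<or> w \<in> smalls L"
    using L unfolding partial_schedule_def schedule_def by blast+
  have "distinct (map fst (L @ tagged (iso E W) True))"
    using dist set_L iso distinct_tagged[OF fin_W] fst_set_tagged[OF fin_W] by auto
  moreover have "fst ` set (L @ tagged (iso E W) True) = (V - W) \<union> W"
    using set_L iso fst_set_tagged[OF fin_W] by (simp add: image_Un)
  moreover have "(V - W) \<union> W = V"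
    using W by blast
  moreover have "admissible E D 0 {} (L @ tagged (iso E W) True)"
    using adm admissible_isolated[OF fin_W closed D] by (simp add: admissible_append)
  ultimately show ?thesis
    unfolding schedule_def by simp
qed

text \<open>In the clique case the last stage is an ordinary one, at any vertex of the clique.\<close>
lemma schedule_of_terminal:
  assumes G: "graph V E" and L: "partial_schedule V E D L W" and W: "W \<subseteq> V"
    and terminal: "terminal E W"
    and d: "d = (if is_empty_form E W then 0 else card (core E W) - 1)"
    and D: "excess L \<le> D" "excess L - int (card (iso E W)) + int d \<le> D"
  shows "\<exists>xs. schedule V E D xs \<and> excess xs \<le> excess L - int (card (iso E W)) + int d"
proof (cases "is_empty_form E W")
  case True
  then have "core E W = {}"
    by (simp add: is_empty_form_def)
  then have "schedule V E D (L @ tagged (iso E W) True)"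
    using schedule_of_empty_core[OF G L W _ D(1)] by blast
  moreover have "finite (iso E W)"
    using finite_subset[OF W graph_finite[OF G]] by (simp add: iso_def)
  then have "excess (L @ tagged (iso E W) True) = excess L - int (card (iso E W)) + int d"
    using True d by (simp add: excess_tagged)
  ultimately show ?thesis
    by (intro exI[of _ "L @ tagged (iso E W) True"]) simp
next
  case False
  then have clique: "\<forall>x\<in>core E W. \<forall>y\<in>core E W. x \<noteq> y \<longrightarrow> E x y" "card (core E W) \<ge> 2"
    using terminal by (simp_all add: terminal_def is_clique_form_def)
  then obtain c where c: "c \<in> core E W"
    by (metis card.empty ex_in_conv not_numeral_le_zero)
  have nbrs: "core_nbrs E W c = core E W - {c}"
    using clique(1) c graph_irrefl[OF G] by (auto simp: core_nbrs_def)
  then have "card (core_nbrs E W c) = d"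
    using False c d by simp
  moreover have "next_set E W c = {}"
    using nbrs by (auto simp: next_set_eq)
  ultimately have "partial_schedule V E D (L @ stage_block E W c) {}"
    using partial_schedule_stage[OF G L W c D(1)] D(2) by simp
  moreover have "excess (L @ stage_block E W c) \<le> excess L - int (card (iso E W)) + int d"
    using \<open>card (core_nbrs E W c) = d\<close> excess_stage_block[OF finite_subset[OF W graph_finite[OF G]]]
    by simp
  ultimately show ?thesis
    using schedule_of_partial_schedule_empty by blast
qed

lemma dW_subset: "dW V E u k \<subseteq> V"
  by (induction k) (auto simp: next_set_def core_def)

lemma dseq_m_Suc: "dseq_m V E u (Suc k) = card (iso E (dW V E u k))"
  by (simp add: dseq_m_def calG_def)

lemma dseq_d_Suc:
  "Suc k < s \<Longrightarrow> dseq_d V E u s (Suc k) = card (core_nbrs E (dW V E u k) (u (Suc k)))"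
  by (simp add: dseq_d_def calG_def core_nbrs_def)

lemma dseq_z_one: "dseq_z V E u s 1 = 0"
  by (simp add: dseq_z_def)

lemma dseq_z_Suc: "1 \<le> k \<Longrightarrow> dseq_z V E u s (Suc k) = dseq_z V E u s k + dseq_y V E u s (Suc k)"
  by (simp add: dseq_z_def)

lemma is_dseq_core: "is_dseq V E u s \<Longrightarrow> 1 \<le> i \<Longrightarrow> i < s \<Longrightarrow> u i \<in> core E (calG V E u i)"
  unfolding is_dseq_def by simp

lemma is_dseq_terminal: "is_dseq V E u s \<Longrightarrow> 2 \<le> s \<and> terminal E (calG V E u s)"
  unfolding is_dseq_def by (elim conjE) (intro conjI)

primrec dseq_prefix :: "'v set \<Rightarrow> ('v \<Rightarrow> 'v \<Rightarrow> bool) \<Rightarrow> (nat \<Rightarrow> 'v) \<Rightarrow> nat \<Rightarrow> ('v \<times> bool) list" where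
  "dseq_prefix V E u 0 = []"
| "dseq_prefix V E u (Suc k) = dseq_prefix V E u k @ stage_block E (dW V E u k) (u (Suc k))"

lemma excess_dseq_prefix:
  assumes G: "graph V E"
  shows "0 < k \<Longrightarrow> k < s \<Longrightarrow> excess (dseq_prefix V E u k)
    = int (dseq_d V E u s 1) - int (dseq_m V E u 1) - 1 - dseq_z V E u s k"
proof (induction k)
  case (Suc k)
  have "excess (dseq_prefix V E u (Suc k))
      = excess (dseq_prefix V E u k) + int (dseq_d V E u s (Suc k)) - int (dseq_m V E u (Suc k)) - 1"
    using excess_stage_block[OF finite_subset[OF dW_subset[of V E u k] graph_finite[OF G]]]
      dseq_m_Suc[of V E u k] dseq_d_Suc[OF Suc.prems(2), where V = V and E = E and u = u]
    by simp
  then show ?case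
    using Suc dseq_z_one[of V E u s] dseq_z_Suc[of k V E u s] by (cases "k = 0") (auto simp: dseq_y_def)
qed simp

lemma dseq_prefix_partial:
  assumes G: "graph V E" and ds: "is_dseq V E u s"
    and D: "\<forall>i\<in>{1..s}. int (dseq_d V E u s 1) - dseq_z V E u s i \<le> D"
  shows "k < s \<Longrightarrow> partial_schedule V E D (dseq_prefix V E u k) (dW V E u k)"
proof (induction k)
  case 0
  show ?case
    using partial_schedule_Nil[OF G] by simp
next
  case (Suc k)
  let ?W = "dW V E u k" and ?c = "u (Suc k)" and ?L = "dseq_prefix V E u k"
  let ?d1 = "int (dseq_d V E u s 1)" and ?m1 = "int (dseq_m V E u 1)" and ?z = "dseq_z V E u s"
  have c: "?c \<in> core E ?W"
    using is_dseq_core[OF ds _ Suc.prems] by (simp add: calG_def)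
  have "excess ?L - int (card (iso E ?W)) + int (card (core_nbrs E ?W ?c)) = ?d1 - ?m1 - ?z (Suc k)"
    using excess_dseq_prefix[OF G, of "Suc k" s u] Suc.prems
      excess_stage_block[OF finite_subset[OF dW_subset[of V E u k] graph_finite[OF G]]]
    by simp
  moreover have "excess ?L \<le> D"
  proof (cases "k = 0")
    case True
    then show ?thesis
      using D Suc.prems dseq_z_one[of V E u s] by force
  next
    case False
    then have "?d1 - ?z k \<le> D"
      using D Suc.prems by simp
    then show ?thesis
      using excess_dseq_prefix[OF G, of k s u] False Suc.prems by simp
  qed
  moreover have "?d1 - ?z (Suc k) \<le> D"
    using D Suc.prems by simp
  ultimately show ?case
    using partial_schedule_stage[OF G _ dW_subset c] Suc by simp
qed

lemma dseq_z_lower_bound: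
  assumes "L \<le> 0" "\<forall>i\<in>{2..s}. L \<le> dseq_z V E u s i"
  shows "\<forall>i\<in>{1..s}. L \<le> dseq_z V E u s i"
proof
  fix i assume "i \<in> {1..s}"
  then show "L \<le> dseq_z V E u s i"
    using assms dseq_z_one[of V E u s] by (cases "i = 1") auto
qed

theorem dseq_schedule:
  assumes G: "graph V E" and ds: "is_dseq V E u s"
    and L: "L \<le> 0" "\<forall>i\<in>{2..s}. L \<le> dseq_z V E u s i"
  shows "\<exists>xs. schedule V E (int (dseq_d V E u s 1) - L) xs
    \<and> excess xs \<le> int (dseq_d V E u s 1) - dseq_z V E u s s"
proof -
  let ?d1 = "int (dseq_d V E u s 1)" and ?m1 = "int (dseq_m V E u 1)" and ?z = "dseq_z V E u s"
  define D where "D = ?d1 - L"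
  have D: "\<forall>i\<in>{1..s}. ?d1 - ?z i \<le> D"
    using dseq_z_lower_bound[OF L] by (simp add: D_def)
  have "2 \<le> s"
    using is_dseq_terminal[OF ds] by (rule conjunct1)
  then obtain k where s: "s = Suc k" "1 \<le> k"
    by (cases s) auto
  let ?W = "dW V E u k" and ?L = "dseq_prefix V E u k"
  have "k < s"
    using s by simp
  then have partial: "partial_schedule V E D ?L ?W" and excess_L: "excess ?L = ?d1 - ?m1 - 1 - ?z k"
    using dseq_prefix_partial[OF G ds D] excess_dseq_prefix[OF G] s(2) by simp_all
  have terminal: "terminal E ?W"
    using is_dseq_terminal[OF ds] s(1) by (simp add: calG_def)
  have d_s: "dseq_d V E u s s = (if is_empty_form E ?W then 0 else card (core E ?W) - 1)"
    using s(1) by (simp add: dseq_d_def calG_def)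
  have z_s: "?z s = ?z k + int (card (iso E ?W)) + 1 - int (dseq_d V E u s s)"
    using dseq_z_Suc[OF s(2), of V E u s] dseq_m_Suc[of V E u k] s(1) by (simp add: dseq_y_def)
  have "excess ?L \<le> D" "excess ?L - int (card (iso E ?W)) + int (dseq_d V E u s s) \<le> D"
    using excess_L z_s D s by force+
  then obtain xs where "schedule V E D xs"
    "excess xs \<le> excess ?L - int (card (iso E ?W)) + int (dseq_d V E u s s)"
    using schedule_of_terminal[OF G partial dW_subset terminal d_s] by blast
  then show ?thesis
    using excess_L z_s by (auto simp: D_def)
qed

section \<open>Disjoint unions\<close>

lemma sum_edges_Inl: "sum_edges EH ET (Inl x) w \<Longrightarrow> \<exists>w0. w = Inl w0 \<and> EH x w0"
  by (cases w) auto

lemma sum_edges_Inr: "sum_edges EH ET (Inr x) w \<Longrightarrow> \<exists>w0. w = Inr w0 \<and> ET x w0"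
  by (cases w) auto

lemma graph_sum:
  assumes "graph VH EH" "graph VT ET"
  shows "graph (sum_verts VH VT) (sum_edges EH ET)"
proof -
  have "sum_edges EH ET x y \<longrightarrow> sum_edges EH ET y x \<and> x \<in> sum_verts VH VT \<and> y \<in> sum_verts VH VT"
    for x y
    using assms by (cases x; cases y) (auto simp: sum_verts_def dest: graph_sym graph_edge_in)
  moreover have "\<not> sum_edges EH ET x x" for x
    using assms by (cases x) (auto dest: graph_irrefl)
  ultimately show ?thesis
    using assms by (auto simp: graph_def sum_verts_def)
qed

lemma degree_sum_Inl: "degree (sum_verts VH VT) (sum_edges EH ET) (Inl x) = degree VH EH x"
proof -
  have "{w \<in> sum_verts VH VT. sum_edges EH ET (Inl x) w} = Inl ` {w \<in> VH. EH x w}"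
    unfolding sum_verts_def by (auto dest: sum_edges_Inl)
  then show ?thesis
    unfolding degree_def by (simp add: card_image)
qed

lemma degree_sum_Inr: "degree (sum_verts VH VT) (sum_edges EH ET) (Inr x) = degree VT ET x"
proof -
  have "{w \<in> sum_verts VH VT. sum_edges EH ET (Inr x) w} = Inr ` {w \<in> VT. ET x w}"
    unfolding sum_verts_def by (auto dest: sum_edges_Inr)
  then show ?thesis
    unfolding degree_def by (simp add: card_image)
qed

lemma mindeg_sum:
  assumes "finite VH" "finite VT" "VH \<noteq> {}" "VT \<noteq> {}"
  shows "mindeg (sum_verts VH VT) (sum_edges EH ET) = min (mindeg VH EH) (mindeg VT ET)"
proof -
  have "f ` sum_verts VH VT = (\<lambda>x. f (Inl x)) ` VH \<union> (\<lambda>x. f (Inr x)) ` VT" for f :: "_ \<Rightarrow> nat"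
    by (auto simp: sum_verts_def)
  then have "degree (sum_verts VH VT) (sum_edges EH ET) ` sum_verts VH VT
      = degree VH EH ` VH \<union> degree VT ET ` VT"
    by (simp only: degree_sum_Inl degree_sum_Inr)
  then show ?thesis
    using assms by (simp add: mindeg_def Min_Un)
qed

lemma schedule_sum:
  assumes T: "schedule VT ET D xsT" and H: "schedule VH EH DH xsH" and D: "DH + excess xsT \<le> D"
  shows "schedule (sum_verts VH VT) (sum_edges EH ET) D (map (apfst Inr) xsT @ map (apfst Inl) xsH)"
proof -
  let ?E = "sum_edges EH ET" and ?T = "map (apfst Inr) xsT" and ?H = "map (apfst Inl) xsH"
  have admT: "admissible ?E D 0 {} ?T"
    using T sum_edges_Inr unfolding schedule_def by (intro admissible_map) auto
  have admH: "admissible ?E D (excess ?T) (smalls ?T) ?H"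
    using H D sum_edges_Inl unfolding schedule_def by (intro admissible_map) (auto simp: excess_map_apfst)
  have "distinct (map fst (?T @ ?H))"
    using T H unfolding schedule_def by (auto simp: distinct_map inj_on_def)
  moreover have "fst ` set (?T @ ?H) = sum_verts VH VT"
    using T H unfolding schedule_def sum_verts_def by (auto simp: image_image image_Un)
  moreover have "admissible ?E D 0 {} (?T @ ?H)"
    using admT admH by (simp add: admissible_append)
  ultimately show ?thesis
    unfolding schedule_def by blast
qed

lemma str_sum_lower_bound:
  assumes "graph VH EH" "graph VT ET" "VH \<noteq> {}" "VT \<noteq> {}" "1 \<le> mindeg VH EH" "1 \<le> mindeg VT ET"
  shows "card (sum_verts VH VT) + mindeg (sum_verts VH VT) (sum_edges EH ET)
    \<le> str (sum_verts VH VT) (sum_edges EH ET)"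
  using str_lower_bound[OF graph_sum[OF assms(1,2)]]
    mindeg_sum[OF graph_finite[OF assms(1)] graph_finite[OF assms(2)] assms(3,4)] assms(3-6)
  by (simp add: sum_verts_def)

lemma str_sum_le_of_schedules:
  assumes "graph VH EH" "graph VT ET" "EH x y"
    and "schedule VT ET (int D) xsT" "schedule VH EH DH xsH"
    and "DH + excess xsT \<le> int D" "excess xsT + excess xsH \<le> int D + 1"
  shows "str (sum_verts VH VT) (sum_edges EH ET) \<le> card (sum_verts VH VT) + D"
proof -
  have "sum_edges EH ET (Inl x) (Inl y)"
    using assms(3) by simp
  from str_le_of_schedule[OF graph_sum[OF assms(1,2)] this schedule_sum[OF assms(4-6)]]
  show ?thesis
    using assms(7) by (simp add: excess_map_apfst)
qed

theorem mainTheorem7: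
  fixes VH :: "'a set" and EH :: "'a \<Rightarrow> 'a \<Rightarrow> bool" and uH :: "nat \<Rightarrow> 'a" and s :: nat
    and VT :: "'b set" and ET :: "'b \<Rightarrow> 'b \<Rightarrow> bool" and uT :: "nat \<Rightarrow> 'b" and t :: nat
    and Z :: int
  assumes "graph VH EH"
    and "1 \<le> mindeg VH EH" and "mindeg VH EH \<le> card VH - 2"
    and "is_dseq VH EH uH s"
    and "Z = Min ((\<lambda>i. dseq_z VH EH uH s i) ` {2..s})"
    and "Z \<le> 0"
    and "graph VT ET"
    and "1 \<le> mindeg VT ET" and "mindeg VT ET \<le> card VT - 2"
    and "is_dseq VT ET uT t"
    and "\<forall>i \<in> {2..t}. dseq_z VT ET uT t i \<ge> 0"
    and "dseq_z VT ET uT t t \<ge> int (dseq_d VH EH uH s 1) - Z"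
  shows "card (sum_verts VH VT) + mindeg (sum_verts VH VT) (sum_edges EH ET)
           \<le> str (sum_verts VH VT) (sum_edges EH ET)
       \<and> str (sum_verts VH VT) (sum_edges EH ET)
           \<le> card (sum_verts VH VT) + dseq_d VT ET uT t 1"
proof -
  let ?dH = "int (dseq_d VH EH uH s 1)" and ?dT = "dseq_d VT ET uT t 1"
  have ne: "VH \<noteq> {}" "VT \<noteq> {}"
    using assms(2,3,8,9) by auto
  obtain xsT where xsT: "schedule VT ET (int ?dT) xsT" "excess xsT \<le> int ?dT - dseq_z VT ET uT t t"
    using dseq_schedule[OF assms(7,10), of 0] assms(11) by auto
  have Z: "\<forall>i\<in>{2..s}. Z \<le> dseq_z VH EH uH s i"
    using assms(5) by simp
  obtain xsH where xsH: "schedule VH EH (?dH - Z) xsH" "excess xsH \<le> ?dH - dseq_z VH EH uH s s"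
    using dseq_schedule[OF assms(1,4,6) Z] by blast
  have "Z \<le> dseq_z VH EH uH s s"
    using Z is_dseq_terminal[OF assms(4)] by simp
  moreover obtain x y where "EH x y"
    using ne(1) ex_edge_of_mindeg[OF graph_finite[OF assms(1)] _ assms(2)] by blast
  ultimately have "str (sum_verts VH VT) (sum_edges EH ET) \<le> card (sum_verts VH VT) + ?dT"
    using str_sum_le_of_schedules[OF assms(1,7) _ xsT(1) xsH(1)] xsT(2) xsH(2) assms(12) by simp
  then show ?thesis
    using str_sum_lower_bound[OF assms(1,7) ne assms(2,8)] by simp
qed

end
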